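(* For all $i=1,\dots,r$, under the free field action of $\hat{\mathfrak g}$ on $M_N\otimes\hat\pi^{k-k_c}_N$ described in the context, \[h_{i,N}|0\rangle'=b_{i,N}|0\rangle',\] where $|0\rangle'=|0\rangle\otimes|0\rangle$ and $h_{i,N}=h_{\alpha_i}\otimes t^N$.
   Context: Let $\mathfrak g$ be a simple complex Lie algebra with triangular decomposition $\mathfrak g=\mathfrak u_-\oplus\mathfrak h\oplus\mathfrak u$, positive roots $\Delta_+$, simple roots $\alpha_1,\dots,\alpha_r$, $h_i=h_{\alpha_i}$ the coroots. Let $(x,y)=\frac{1}{2h^\vee}\mathrm{tr}(\mathrm{ad}_x\mathrm{ad}_y)$, $k_c=-h^\vee$, and $\hat{\mathfrak g}=\mathfrak g\otimes\mathbb C((t))\oplus\mathbb C\mathbf 1$ the affine Kac–Moody algebra with $[x_1\otimes g_1,x_2\otimes g_2]=[x_1,x_2]\otimes g_1g_2+(x_1,x_2)\mathrm{Res}_t(g_1dg_2)\mathbf 1$. Fix $N\ge1$. $\mathcal A$ is generated by $a_{\alpha,n},a^*_{\alpha,n}$ ($\alpha\in\Delta_+,n\in\mathbb Z$) with $[a_{\alpha,n},a^*_{\beta,m}]=\delta_{\alpha\beta}\delta_{n,-m}$, others zero; $M_N$ is the $\mathcal A$-module generated by $|0\rangle$ with $a_{\alpha,n}|0\rangle=0$ ($n\ge N$), $a^*_{\alpha,n}|0\rangle=0$ ($n\ge0$). $\hat{\mathfrak h}_\kappa$ has basis $b_{i,n}$, central $\mathbf 1$, $[b_{i,n},b_{j,m}]=-n\kappa(h_i,h_j)\delta_{n,-m}\mathbf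 1$; $\hat\pi^\kappa_N$ is generated by $|0\rangle$ with $b_{i,n}|0\rangle=0$ ($n>N$), $\mathbf 1=1$. In the free field realization, the field $h_i(z)=\sum_n(h_i\otimes t^n)z^{-n-1}$ acts on $M_N\otimes\hat\pi^{k-k_c}_N$ by $-\sum_{\beta\in\Delta_+}\beta(h_i){:}a^*_\beta(z)a_\beta(z){:}+b_i(z)$, where $a_\beta(z)=\sum a_{\beta,n}z^{-n-1}$, $a^*_\beta(z)=\sum a^*_{\beta,n}z^{-n}$, $b_i(z)=\sum b_{i,n}z^{-n-1}$ and normal ordering moves $a_{\beta,n}$ ($n\ge0$) and $a^*_{\beta,m}$ ($m>0$) to the right. *)

theory Defs
  imports Main "HOL.Complex"
begin

text \<open>Sum over the (necessarily finite, in the Fock module) support of a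
  family of vectors indexed by integers; used for mode coefficients of
  normally ordered products of fields.\<close>
definition fsum :: "(int \<Rightarrow> 'v::comm_monoid_add) \<Rightarrow> 'v" where
  "fsum f = (if finite {m. f m \<noteq> 0} then (\<Sum>m\<in>{m. f m \<noteq> 0}. f m) else 0)"

text \<open>Normally ordered product :a*_{beta,m} a_{beta,n}: : the operator
  a*_{beta,m} with m > 0 is moved to the right (a_{beta,n} with n >= 0 is already
  on the right in a*_{beta,m} a_{beta,n}).\<close>
definition nord ::
  "('r \<Rightarrow> int \<Rightarrow> 'v \<Rightarrow> 'v) \<Rightarrow> ('r \<Rightarrow> int \<Rightarrow> 'v \<Rightarrow> 'v) \<Rightarrow> 'r \<Rightarrow> int \<Rightarrow> int \<Rightarrow> 'v \<Rightarrow> 'v" where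
  "nord a astar \<beta> m n v = (if 0 < m then a \<beta> n (astar \<beta> m v) else astar \<beta> m (a \<beta> n v))"

text \<open>Mode h_{i,n} = h_i \<otimes> t^n of the free field realization:
  h_i(z) = - sum_{beta in Delta_+} beta(h_i) :a*_beta(z) a_beta(z): + b_i(z),
  with a_beta(z) = sum a_{beta,n} z^{-n-1}, a*_beta(z) = sum a*_{beta,n} z^{-n},
  b_i(z) = sum b_{i,n} z^{-n-1}; the coefficient of z^{-n-1} is
  - sum_beta beta(h_i) sum_{m} :a*_{beta,m} a_{beta,n-m}: + b_{i,n}.
  Here wt beta i stands for beta(h_i) and sc is the complex scalar multiplication.\<close>
definition hmode ::
  "(complex \<Rightarrow> 'v::ab_group_add \<Rightarrow> 'v) \<Rightarrow> 'r set \<Rightarrow> ('r \<Rightarrow> 'i \<Rightarrow> complex) \<Rightarrow>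
   ('r \<Rightarrow> int \<Rightarrow> 'v \<Rightarrow> 'v) \<Rightarrow> ('r \<Rightarrow> int \<Rightarrow> 'v \<Rightarrow> 'v) \<Rightarrow> ('i \<Rightarrow> int \<Rightarrow> 'v \<Rightarrow> 'v) \<Rightarrow>
   'i \<Rightarrow> int \<Rightarrow> 'v \<Rightarrow> 'v" where
  "hmode sc Pos wt a astar b i n v =
     b i n v - (\<Sum>\<beta>\<in>Pos. sc (wt \<beta> i) (fsum (\<lambda>m. nord a astar \<beta> m (n - m) v)))"

end

theory Submission
  imports Defs
begin

text \<open>In the mode h_{i,N} every normally ordered summand :a*_{beta,m} a_{beta,N-m}: has a
  rightmost factor that kills the vacuum: a*_{beta,m} if m > 0, and otherwise a_{beta,N-m}
  with N - m \<ge> N.\<close>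

lemma nord_eq_0:
  assumes "Vector_Spaces.linear s s (a \<beta> n)" and "Vector_Spaces.linear s s (astar \<beta> m)"
    and "0 < m \<Longrightarrow> astar \<beta> m v = 0" and "m \<le> 0 \<Longrightarrow> a \<beta> n v = 0"
  shows "nord a astar \<beta> m n v = 0"
  using assms module_hom.zero[OF assms(1)[unfolded linear_iff_module_hom]]
    module_hom.zero[OF assms(2)[unfolded linear_iff_module_hom]]
  unfolding nord_def by auto

lemma fsum_zero [simp]: "fsum (\<lambda>_. 0) = 0"
  unfolding fsum_def by simp

lemma hmode_eq_b_mode:
  assumes "vector_space sc"
    and "\<And>\<beta> m. \<beta> \<in> Pos \<Longrightarrow> nord a astar \<beta> m (n - m) v = 0"
  shows "hmode sc Pos wt a astar b i n v = b i n v"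
proof -
  have "sc (wt \<beta> i) (fsum (\<lambda>m. nord a astar \<beta> m (n - m) v)) = 0" if "\<beta> \<in> Pos" for \<beta>
    using assms(2)[OF that] module.scale_zero_right[OF assms(1)[folded module_iff_vector_space]] by simp
  then show ?thesis
    unfolding hmode_def by simp
qed

theorem mainTheorem9:
  fixes sc :: "complex \<Rightarrow> 'v::ab_group_add \<Rightarrow> 'v"
    and Pos :: "'r set" and simple :: "'i set"
    and wt :: "'r \<Rightarrow> 'i \<Rightarrow> complex"
    and kappa :: "'i \<Rightarrow> 'i \<Rightarrow> complex"
    and a astar :: "'r \<Rightarrow> int \<Rightarrow> 'v \<Rightarrow> 'v"
    and b :: "'i \<Rightarrow> int \<Rightarrow> 'v \<Rightarrow> 'v"
    and vac :: 'v and N :: int and i :: 'i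
  assumes vs: "vector_space sc"
    and fin: "finite Pos" and finI: "finite simple"
    and N: "N \<ge> 1"
    and lin_a: "\<And>\<alpha> n. Vector_Spaces.linear sc sc (a \<alpha> n)"
    and lin_astar: "\<And>\<alpha> n. Vector_Spaces.linear sc sc (astar \<alpha> n)"
    and lin_b: "\<And>j n. Vector_Spaces.linear sc sc (b j n)"
    and comm_a_astar: "\<And>\<alpha> \<beta> n m v. \<alpha> \<in> Pos \<Longrightarrow> \<beta> \<in> Pos \<Longrightarrow>
        a \<alpha> n (astar \<beta> m v) - astar \<beta> m (a \<alpha> n v) = (if \<alpha> = \<beta> \<and> n = - m then v else 0)"
    and comm_a_a: "\<And>\<alpha> \<beta> n m v. \<alpha> \<in> Pos \<Longrightarrow> \<beta> \<in> Pos \<Longrightarrow>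
        a \<alpha> n (a \<beta> m v) = a \<beta> m (a \<alpha> n v)"
    and comm_astar_astar: "\<And>\<alpha> \<beta> n m v. \<alpha> \<in> Pos \<Longrightarrow> \<beta> \<in> Pos \<Longrightarrow>
        astar \<alpha> n (astar \<beta> m v) = astar \<beta> m (astar \<alpha> n v)"
    and comm_b_b: "\<And>j l n m v. j \<in> simple \<Longrightarrow> l \<in> simple \<Longrightarrow>
        b j n (b l m v) - b l m (b j n v) = (if n = - m then sc (- of_int n * kappa j l) v else 0)"
    and comm_a_b: "\<And>\<alpha> j n m v. \<alpha> \<in> Pos \<Longrightarrow> j \<in> simple \<Longrightarrow> a \<alpha> n (b j m v) = b j m (a \<alpha> n v)"
    and comm_astar_b: "\<And>\<alpha> j n m v. \<alpha> \<in> Pos \<Longrightarrow> j \<in> simple \<Longrightarrow>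
        astar \<alpha> n (b j m v) = b j m (astar \<alpha> n v)"
    and vac_a: "\<And>\<alpha> n. \<alpha> \<in> Pos \<Longrightarrow> n \<ge> N \<Longrightarrow> a \<alpha> n vac = 0"
    and vac_astar: "\<And>\<alpha> n. \<alpha> \<in> Pos \<Longrightarrow> n \<ge> 0 \<Longrightarrow> astar \<alpha> n vac = 0"
    and vac_b: "\<And>j n. j \<in> simple \<Longrightarrow> n > N \<Longrightarrow> b j n vac = 0"
    and i: "i \<in> simple"
  shows "hmode sc Pos wt a astar b i N vac = b i N vac"
proof (rule hmode_eq_b_mode[OF vs])
  fix \<beta> m
  assume "\<beta> \<in> Pos"
  then show "nord a astar \<beta> m (N - m) vac = 0"
    by (intro nord_eq_0[where s = sc] lin_a lin_astar) (auto intro: vac_a vac_astar)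
qed

end
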